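(* If $T\in\mathcal{T}$, then $\gamma_e(T)=\gamma(T)$.
   Context: All graphs are finite, simple and undirected; subcubic means maximum degree at most $3$; an endvertex is a vertex of degree at most $1$; $P_1$ is the one-vertex graph. $\gamma(G)$ is the domination number of $G$; a minimum dominating set is a dominating set of size $\gamma(G)$. For $X\subseteq V(G)$, $\gamma(G,X)$ is the minimum size of a set $D\subseteq V(G)$ such that every vertex of $X\setminus D$ has a neighbor in $D$. For $D\subseteq V(G)$ and vertices $u,v$, $\mathrm{dist}_{(G,D)}(u,v)$ is the minimum number of edges of a path $P$ in $G$ between $u$ and $v$ such that $D$ contains exactly one endvertex of $P$ and no internal vertex of $P$ ($\infty$ if none; $\mathrm{dist}_{(G,D)}(u,u)=0$ for $u\in D$); $w_{(G,D)}(u)=\sum_{v\in D}\left(\frac12\right)^{\mathrm{dist}_{(G,D)}(u,v)-1}$ with $\left(\frac12\right)^\infty=0$. $D$ is an exponential dominating set if $w_{(G,D)}(u)\ge1$ for all $u\in V(G)$; $\gamma_e(G)$ is the minimum size of such a set. For a graph $G$ and vertex $x$, $\tau_G(x)$ is the minimum real $\tau$ such that there exists $D\subseteq V(G)$ with $|D|<\gamma_e(G)$, $x\notin D$, and $w_{(G,D)}(u)+\left(\frac12\right)^{\mathrm{dist}_{G-D}(x,u)}\tau\ge 1$ for every $u\in V(G)\setminus D$ (here $\mathrm{dist}_{G-D}$ is the usual distance in $G-D$). Operations on trees, producing a tree $T$ from a tree $T'$: Operation 1: $T$ has an endvertex $y$ with neighbor $x$ such that $T'=T-y$ and $x$ belongs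 to some minimum dominating set of $T'$. Operation 2: $T$ contains a path $xyz$ where $y$ has degree $2$ in $T$, $z$ is an endvertex of $T$, $T'=T-\{y,z\}$, and $\tau_{T'}(x)>1$ or $\gamma(T',V(T')\setminus\{x\})<\gamma(T')$. Operation 3: $T$ contains a path $wxyz$ where $x$ and $y$ have degree $2$ in $T$, $z$ is an endvertex of $T$, $T'=T-\{x,y,z\}$, and $\tau_{T'}(w)>\frac12$. $\mathcal{T}$ is the family of subcubic trees obtained from $P_1$ by applying finite sequences of Operations 1, 2, 3. *)

theory Defs
  imports Complex_Main "HOL-Library.Extended_Nat" "HOL-Library.Extended_Real"
begin

type_synonym 'a graph = "'a set \<times> 'a set set"

definition verts :: "'a graph \<Rightarrow> 'a set" where "verts G = fst G"
definition edges :: "'a graph \<Rightarrow> 'a set set" where "edges G = snd G"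

definition degree :: "'a graph \<Rightarrow> 'a \<Rightarrow> nat" where
  "degree G v = card {u \<in> verts G. {u, v} \<in> edges G}"

definition subcubic :: "'a graph \<Rightarrow> bool" where
  "subcubic G \<longleftrightarrow> (\<forall>v \<in> verts G. degree G v \<le> 3)"

definition gpath :: "'a graph \<Rightarrow> 'a list \<Rightarrow> bool" where
  "gpath G p \<longleftrightarrow> p \<noteq> [] \<and> distinct p \<and> set p \<subseteq> verts G \<and>
     (\<forall>i. Suc i < length p \<longrightarrow> {p ! i, p ! Suc i} \<in> edges G)"

definition dist :: "'a graph \<Rightarrow> 'a \<Rightarrow> 'a \<Rightarrow> enat" where
  "dist G u v = Inf {enat (length p - 1) | p. gpath G p \<and> hd p = u \<and> last p = v}"

definition del :: "'a graph \<Rightarrow> 'a set \<Rightarrow> 'a graph" where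
  "del G D = (verts G - D, {e \<in> edges G. e \<inter> D = {}})"

definition distD :: "'a graph \<Rightarrow> 'a set \<Rightarrow> 'a \<Rightarrow> 'a \<Rightarrow> enat" where
  "distD G D u v = Inf {enat (length p - 1) | p. gpath G p \<and> hd p = u \<and> last p = v \<and>
      card ({hd p, last p} \<inter> D) = 1 \<and>
      (\<forall>i. 0 < i \<and> Suc i < length p \<longrightarrow> p ! i \<notin> D)}"

definition half_pow :: "enat \<Rightarrow> real" where
  "half_pow d = (case d of enat n \<Rightarrow> (1/2) ^ n | \<infinity> \<Rightarrow> 0)"

text \<open>(1/2)^(d-1) = 2 * (1/2)^d, with value 0 at infinity.\<close>
definition wgt :: "'a graph \<Rightarrow> 'a set \<Rightarrow> 'a \<Rightarrow> real" where
  "wgt G D u = (\<Sum>v\<in>D. 2 * half_pow (distD G D u v))"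

definition exp_dom :: "'a graph \<Rightarrow> 'a set \<Rightarrow> bool" where
  "exp_dom G D \<longleftrightarrow> D \<subseteq> verts G \<and> (\<forall>u \<in> verts G. wgt G D u \<ge> 1)"

definition gamma_e :: "'a graph \<Rightarrow> nat" where
  "gamma_e G = (LEAST k. \<exists>D. exp_dom G D \<and> card D = k)"

definition dominating :: "'a graph \<Rightarrow> 'a set \<Rightarrow> bool" where
  "dominating G D \<longleftrightarrow> D \<subseteq> verts G \<and>
     (\<forall>v \<in> verts G - D. \<exists>u \<in> D. {u, v} \<in> edges G)"

definition gamma :: "'a graph \<Rightarrow> nat" where
  "gamma G = (LEAST k. \<exists>D. dominating G D \<and> card D = k)"

definition min_dom_set :: "'a graph \<Rightarrow> 'a set \<Rightarrow> bool" where
  "min_dom_set G D \<longleftrightarrow> dominating G D \<and> card D = gamma G"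

definition gammaX :: "'a graph \<Rightarrow> 'a set \<Rightarrow> nat" where
  "gammaX G X = (LEAST k. \<exists>D. D \<subseteq> verts G \<and> card D = k \<and>
      (\<forall>v \<in> X - D. \<exists>u \<in> D. {u, v} \<in> edges G))"

text \<open>tau_G(x), as an extended real (the minimum is attained whenever the set is
nonempty; the empty set yields \<infinity>).\<close>
definition tau :: "'a graph \<Rightarrow> 'a \<Rightarrow> ereal" where
  "tau G x = Inf {ereal t | t. \<exists>D. D \<subseteq> verts G \<and> card D < gamma_e G \<and> x \<notin> D \<and>
      (\<forall>u \<in> verts G - D. wgt G D u + half_pow (dist (del G D) x u) * t \<ge> 1)}"

inductive_set obtainable :: "'a graph set" where
  base: "({v}, {}) \<in> obtainable"
| op1: "\<lbrakk>(V, E) \<in> obtainable; x \<in> V; y \<notin> V;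
         \<exists>D. min_dom_set (V, E) D \<and> x \<in> D\<rbrakk>
        \<Longrightarrow> (insert y V, insert {x, y} E) \<in> obtainable"
| op2: "\<lbrakk>(V, E) \<in> obtainable; x \<in> V; y \<notin> V; z \<notin> V; y \<noteq> z;
         tau (V, E) x > 1 \<or> gammaX (V, E) (V - {x}) < gamma (V, E)\<rbrakk>
        \<Longrightarrow> (V \<union> {y, z}, E \<union> {{x, y}, {y, z}}) \<in> obtainable"
| op3: "\<lbrakk>(V, E) \<in> obtainable; w \<in> V; x \<notin> V; y \<notin> V; z \<notin> V;
         x \<noteq> y; y \<noteq> z; x \<noteq> z; tau (V, E) w > 1/2\<rbrakk>
        \<Longrightarrow> (V \<union> {x, y, z}, E \<union> {{w, x}, {x, y}, {y, z}}) \<in> obtainable"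

end

theory Submission
  imports Defs
begin

text \<open>
  The trees obtainable by the three operations are grown by adding leaves, and for every tree
  grown in this way, every \<open>D \<subseteq> V\<close> and every \<open>w \<notin> D\<close>
    \<open>wgt G D w + (\<Sum>a \<in> V - D. (3 - deg a) * (1/2)^dist\<^sub>G\<^sub>-\<^sub>D(w, a)) = 3\<close>.
  For subcubic trees the sum is nonnegative, so every weight is at most 3, and adding a vertex
  \<open>x\<close> of degree at most 2 to \<open>D\<close> raises the weight at \<open>u\<close> by at least
  \<open>(1/2)^dist\<^sub>G\<^sub>-\<^sub>D(x, u)\<close>.

  As \<open>\<gamma>\<^sub>e \<le> \<gamma>\<close> always holds, it remains to show \<open>\<gamma> \<le> \<gamma>\<^sub>e\<close> along the operations.
  In a minimum exponential dominating set of the new tree, the vertices on the new pendant path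
  can be exchanged for the vertex it is attached to. This gives an exponential dominating set of
  the old tree that is not larger, or a set witnessing \<open>\<tau> \<le> 1\<close> (for Operation 2) or
  \<open>\<tau> \<le> 1/2\<close> (for Operation 3), which the conditions of the operations exclude.
\<close>

definition add_leaf :: "'a graph \<Rightarrow> 'a \<Rightarrow> 'a \<Rightarrow> 'a graph" where
  "add_leaf G x y = (insert y (verts G), insert {x, y} (edges G))"

definition wf_graph :: "'a graph \<Rightarrow> bool" where
  "wf_graph G \<longleftrightarrow> (\<forall>e \<in> edges G. e \<subseteq> verts G)"

lemma verts_pair [simp]: "verts (V, E) = V"
  by (simp add: verts_def)

lemma edges_pair [simp]: "edges (V, E) = E"
  by (simp add: edges_def)

lemma verts_add_leaf [simp]: "verts (add_leaf G x y) = insert y (verts G)"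
  by (simp add: add_leaf_def)

lemma edges_add_leaf [simp]: "edges (add_leaf G x y) = insert {x, y} (edges G)"
  by (simp add: add_leaf_def)

lemma verts_del [simp]: "verts (del G D) = verts G - D"
  by (simp add: del_def)

lemma edges_del [simp]: "edges (del G D) = {e \<in> edges G. e \<inter> D = {}}"
  by (simp add: del_def)

lemma wf_graph_add_leaf: "wf_graph G \<Longrightarrow> x \<in> verts G \<Longrightarrow> wf_graph (add_leaf G x y)"
  unfolding wf_graph_def by auto

lemma add_leaf_edge_to_leaf:
  assumes "wf_graph G" "y \<notin> verts G" "{a, y} \<in> edges (add_leaf G x y)"
  shows "a = x"
  using assms unfolding wf_graph_def by (auto simp: doubleton_eq_iff)

lemma gpath_nonempty: "gpath G p \<Longrightarrow> p \<noteq> []"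
  by (simp add: gpath_def)

lemma gpath_mono:
  "gpath H p \<Longrightarrow> verts H \<subseteq> verts G \<Longrightarrow> edges H \<subseteq> edges G \<Longrightarrow> gpath G p"
  unfolding gpath_def by blast

lemma gpath_del: "gpath (del G D) p \<longleftrightarrow> gpath G p \<and> set p \<inter> D = {}"
proof -
  have "{p ! i, p ! Suc i} \<inter> D = {}" if "set p \<inter> D = {}" "Suc i < length p" for i
  proof -
    have "p ! i \<in> set p" "p ! Suc i \<in> set p"
      using that(2) by simp_all
    then show ?thesis
      using that(1) by blast
  qed
  then show ?thesis
    unfolding gpath_def by auto
qed

lemma gpath_singleton: "a \<in> verts G \<Longrightarrow> gpath G [a]"
  unfolding gpath_def by simp

lemma gpath_rev: "gpath G p \<Longrightarrow> gpath G (rev p)"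
proof -
  assume p: "gpath G p"
  have "{rev p ! i, rev p ! Suc i} \<in> edges G" if "Suc i < length p" for i
  proof -
    have "{p ! (length p - Suc (Suc i)), p ! Suc (length p - Suc (Suc i))} \<in> edges G"
      using p that unfolding gpath_def by auto
    moreover have "Suc (length p - Suc (Suc i)) = length p - Suc i"
      using that by simp
    ultimately show ?thesis
      using that by (simp add: rev_nth insert_commute)
  qed
  with p show ?thesis
    unfolding gpath_def by auto
qed

lemma gpath_snoc_iff:
  assumes "q \<noteq> []"
  shows "gpath G (q @ [a]) \<longleftrightarrow>
    gpath G q \<and> a \<in> verts G \<and> a \<notin> set q \<and> {last q, a} \<in> edges G"
proof -
  have "(\<forall>i. Suc i < length (q @ [a]) \<longrightarrow> {(q @ [a]) ! i, (q @ [a]) ! Suc i} \<in> edges G) \<longleftrightarrow>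
      (\<forall>i. Suc i < length q \<longrightarrow> {q ! i, q ! Suc i} \<in> edges G) \<and> {last q, a} \<in> edges G"
    (is "?L \<longleftrightarrow> ?R")
  proof
    assume L: ?L
    have "{last q, a} \<in> edges G"
      using L[rule_format, of "length q - 1"] assms by (simp add: nth_append last_conv_nth)
    moreover have "{q ! i, q ! Suc i} \<in> edges G" if "Suc i < length q" for i
      using L[rule_format, of i] that by (simp add: nth_append)
    ultimately show ?R by blast
  next
    assume R: ?R
    show ?L
    proof (intro allI impI)
      fix i assume i: "Suc i < length (q @ [a])"
      show "{(q @ [a]) ! i, (q @ [a]) ! Suc i} \<in> edges G"
      proof (cases "Suc i < length q")
        case True
        then show ?thesis using R by (simp add: nth_append)
      next
        case False
        then have "i = length q - 1" using i by simp
        then show ?thesis using R assms by (simp add: nth_append last_conv_nth)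
      qed
    qed
  qed
  then show ?thesis
    using assms unfolding gpath_def by auto
qed

lemma gpath_add_leaf_avoiding:
  assumes "y \<notin> set p"
  shows "gpath (add_leaf G x y) p \<longleftrightarrow> gpath G p"
proof
  assume p: "gpath (add_leaf G x y) p"
  have "{p ! i, p ! Suc i} \<in> edges G" if "Suc i < length p" for i
  proof -
    have "p ! i \<in> set p" "p ! Suc i \<in> set p"
      using that by simp_all
    then have "y \<notin> {p ! i, p ! Suc i}"
      using assms by auto
    then show ?thesis
      using p that unfolding gpath_def by auto
  qed
  then show "gpath G p"
    using p assms unfolding gpath_def by auto
next
  show "gpath G p \<Longrightarrow> gpath (add_leaf G x y) p"
    by (erule gpath_mono) auto
qed

text \<open>An inner occurrence of the new leaf would need two distinct neighbours on the path.\<close>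
lemma gpath_add_leaf_leaf_at_end:
  assumes G: "wf_graph G" "y \<notin> verts G" and p: "gpath (add_leaf G x y) p" and y: "y \<in> set p"
  shows "hd p = y \<or> last p = y"
proof (rule ccontr)
  assume ends: "\<not> (hd p = y \<or> last p = y)"
  obtain k where k: "k < length p" "p ! k = y"
    using y by (auto simp: in_set_conv_nth)
  have ne: "p \<noteq> []"
    using p by (rule gpath_nonempty)
  have "k \<noteq> 0"
  proof
    assume "k = 0"
    then show False using ends k ne by (simp add: hd_conv_nth)
  qed
  have "k \<noteq> length p - 1"
    using ends k ne by (auto simp: last_conv_nth)
  then have "Suc k < length p"
    using k by linarith
  have edge: "{p ! i, p ! Suc i} \<in> edges (add_leaf G x y)" if "Suc i < length p" for i
    using p that unfolding gpath_def by blast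
  have "{p ! (k - 1), y} \<in> edges (add_leaf G x y)"
    using edge[of "k - 1"] k \<open>k \<noteq> 0\<close> by simp
  moreover have "{p ! Suc k, y} \<in> edges (add_leaf G x y)"
    using edge[of k] k \<open>Suc k < length p\<close> by (simp add: insert_commute)
  ultimately have "p ! (k - 1) = p ! Suc k"
    using add_leaf_edge_to_leaf[OF G, of "p ! (k - 1)" x] add_leaf_edge_to_leaf[OF G, of "p ! Suc k" x]
    by simp
  moreover have "distinct p"
    using p by (simp add: gpath_def)
  ultimately show False
    using \<open>Suc k < length p\<close> \<open>k \<noteq> 0\<close> by (simp add: nth_eq_iff_index_eq)
qed

lemma gpath_add_leaf_old_ends:
  assumes G: "wf_graph G" "y \<notin> verts G" and ends: "hd p \<noteq> y" "last p \<noteq> y"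
  shows "gpath (add_leaf G x y) p \<longleftrightarrow> gpath G p"
proof
  assume p: "gpath (add_leaf G x y) p"
  then have "y \<notin> set p"
    using gpath_add_leaf_leaf_at_end[OF G p] ends by blast
  then show "gpath G p"
    using p gpath_add_leaf_avoiding[of y p G x] by simp
next
  show "gpath G p \<Longrightarrow> gpath (add_leaf G x y) p"
    by (erule gpath_mono) auto
qed

lemma gpath_add_leaf_to_leaf:
  assumes G: "wf_graph G" "y \<notin> verts G" and hd: "hd p \<noteq> y"
  shows "gpath (add_leaf G x y) p \<and> last p = y \<longleftrightarrow>
    (\<exists>q. p = q @ [y] \<and> gpath G q \<and> last q = x)"
proof
  assume p: "gpath (add_leaf G x y) p \<and> last p = y"
  define q where "q = butlast p"
  have "p \<noteq> []"
    using p gpath_nonempty by blast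
  then have pq: "p = q @ [y]"
    using p unfolding q_def by (metis append_butlast_last_id)
  then have "q \<noteq> []"
    using hd by auto
  then have "gpath (add_leaf G x y) q" "y \<notin> set q" and last: "{last q, y} \<in> edges (add_leaf G x y)"
    using p pq gpath_snoc_iff[of q "add_leaf G x y" y] by simp_all
  then have "gpath G q"
    using gpath_add_leaf_avoiding[of y q G x] by simp
  moreover have "last q = x"
    using add_leaf_edge_to_leaf[OF G last] .
  ultimately show "\<exists>q. p = q @ [y] \<and> gpath G q \<and> last q = x"
    using pq by blast
next
  assume "\<exists>q. p = q @ [y] \<and> gpath G q \<and> last q = x"
  then obtain q where q: "p = q @ [y]" "gpath G q" "last q = x"
    by blast
  have "y \<notin> set q"
    using q(2) G(2) unfolding gpath_def by auto
  moreover have "gpath (add_leaf G x y) q"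
    using q(2) by (rule gpath_mono) auto
  ultimately show "gpath (add_leaf G x y) p \<and> last p = y"
    using q gpath_snoc_iff[OF gpath_nonempty[OF q(2)], of "add_leaf G x y" y] by simp
qed

lemma Inf_eSuc_image: "Inf (eSuc ` (S :: enat set)) = eSuc (Inf S)"
proof (cases "S = {}")
  case True
  then show ?thesis by (simp add: Inf_enat_def)
next
  case False
  then have "Inf S \<in> S"
    unfolding Inf_enat_def by (auto intro: LeastI)
  then have "Inf (eSuc ` S) \<le> eSuc (Inf S)"
    by (simp add: Inf_lower)
  moreover have "eSuc (Inf S) \<le> Inf (eSuc ` S)"
    by (rule Inf_greatest) (auto simp: Inf_lower)
  ultimately show ?thesis by simp
qed

lemma Inf_lengths_snoc:
  assumes P: "\<And>p. P p \<longleftrightarrow> (\<exists>q. p = q @ [y] \<and> Q q)" and Q: "\<And>q. Q q \<Longrightarrow> q \<noteq> []"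
  shows "Inf {enat (length p - 1) | p. P p} = eSuc (Inf {enat (length q - 1) | q. Q q})"
proof -
  have "{enat (length p - 1) | p. P p} = eSuc ` {enat (length q - 1) | q. Q q}"
  proof (intro equalityI subsetI)
    fix e assume "e \<in> {enat (length p - 1) | p. P p}"
    then obtain p where p: "e = enat (length p - 1)" "P p"
      by blast
    then obtain q where q: "p = q @ [y]" "Q q"
      using P[of p] by blast
    then have "e = eSuc (enat (length q - 1))"
      using p(1) Q[OF q(2)] by (simp add: eSuc_enat)
    then show "e \<in> eSuc ` {enat (length q - 1) | q. Q q}"
      using q(2) by blast
  next
    fix e assume "e \<in> eSuc ` {enat (length q - 1) | q. Q q}"
    then obtain q where "e = eSuc (enat (length q - 1))" "Q q"
      by blast
    moreover have "P (q @ [y])"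
      using P[of "q @ [y]"] \<open>Q q\<close> by blast
    ultimately show "e \<in> {enat (length p - 1) | p. P p}"
      using Q[OF \<open>Q q\<close>] by (intro CollectI exI[of _ "q @ [y]"]) (simp add: eSuc_enat)
  qed
  then show ?thesis
    by (simp add: Inf_eSuc_image)
qed

lemma dist_self: "a \<in> verts G \<Longrightarrow> dist G a a = 0"
proof -
  assume "a \<in> verts G"
  then have "enat (length [a] - 1) \<in> {enat (length p - 1) | p. gpath G p \<and> hd p = a \<and> last p = a}"
    by (intro CollectI exI[of _ "[a]"]) (simp add: gpath_singleton)
  then have "dist G a a \<le> 0"
    unfolding dist_def by (simp add: Inf_lower zero_enat_def)
  then show ?thesis
    by simp
qed

lemma dist_outside: "a \<notin> verts G \<Longrightarrow> dist G a b = \<infinity>"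
proof -
  assume a: "a \<notin> verts G"
  have "hd p \<in> verts G" if "gpath G p" for p
    using that hd_in_set[of p] unfolding gpath_def by blast
  then have E: "{enat (length p - 1) | p. gpath G p \<and> hd p = a \<and> last p = b} = {}"
    using a by blast
  show ?thesis
    unfolding dist_def E by (simp add: top_enat_def)
qed

lemma dist_sym_le: "dist G b a \<le> dist G a b"
  unfolding dist_def
proof (rule Inf_superset_mono, clarify)
  fix p assume p: "gpath G p" "a = hd p" "b = last p"
  then have "gpath G (rev p)" "hd (rev p) = last p" "last (rev p) = hd p"
    using gpath_rev[OF p(1)] gpath_nonempty[OF p(1)] by (simp_all add: hd_rev last_rev)
  then show "\<exists>q. enat (length p - 1) = enat (length q - 1) \<and> gpath G q \<and> hd q = last p \<and> last q = hd p"
    by (intro exI[of _ "rev p"]) simp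
qed

lemma dist_sym: "dist G a b = dist G b a"
  using dist_sym_le[of G a b] dist_sym_le[of G b a] by simp

lemma dist_del_mono: "D \<subseteq> D' \<Longrightarrow> dist (del G D) a b \<le> dist (del G D') a b"
  unfolding dist_def by (rule Inf_superset_mono) (auto simp: gpath_del)

lemma dist_del_add_leaf_old:
  assumes "wf_graph G" "y \<notin> verts G" "a \<noteq> y" "b \<noteq> y"
  shows "dist (del (add_leaf G x y) D) a b = dist (del G D) a b"
proof -
  have "gpath (del (add_leaf G x y) D) p \<and> hd p = a \<and> last p = b \<longleftrightarrow>
      gpath (del G D) p \<and> hd p = a \<and> last p = b" for p
    using gpath_add_leaf_old_ends[OF assms(1,2), of p x] assms(3,4) by (auto simp: gpath_del)
  then show ?thesis
    unfolding dist_def by simp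
qed

lemma dist_del_add_leaf_new:
  assumes G: "wf_graph G" "y \<notin> verts G" and y: "y \<notin> D" and a: "a \<noteq> y"
  shows "dist (del (add_leaf G x y) D) a y = eSuc (dist (del G D) a x)"
proof -
  have "gpath (del (add_leaf G x y) D) p \<and> hd p = a \<and> last p = y \<longleftrightarrow>
      (\<exists>q. p = q @ [y] \<and> gpath (del G D) q \<and> hd q = a \<and> last q = x)" for p
  proof
    assume p: "gpath (del (add_leaf G x y) D) p \<and> hd p = a \<and> last p = y"
    then obtain q where q: "p = q @ [y]" "gpath G q" "last q = x"
      using gpath_add_leaf_to_leaf[OF G, of p x] a by (auto simp: gpath_del)
    moreover have "hd q = a" "set q \<inter> D = {}"
      using p q gpath_nonempty[OF q(2)] by (auto simp: gpath_del)
    ultimately show "\<exists>q. p = q @ [y] \<and> gpath (del G D) q \<and> hd q = a \<and> last q = x"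
      by (auto simp: gpath_del)
  next
    assume "\<exists>q. p = q @ [y] \<and> gpath (del G D) q \<and> hd q = a \<and> last q = x"
    then obtain q where q: "p = q @ [y]" "gpath G q" "set q \<inter> D = {}" "hd q = a" "last q = x"
      by (auto simp: gpath_del)
    moreover have "hd p = a"
      using q gpath_nonempty[OF q(2)] by simp
    ultimately have "gpath (add_leaf G x y) p \<and> last p = y"
      using gpath_add_leaf_to_leaf[OF G, of p x] a by blast
    then show "gpath (del (add_leaf G x y) D) p \<and> hd p = a \<and> last p = y"
      using q \<open>hd p = a\<close> y by (auto simp: gpath_del)
  qed
  then show ?thesis
    unfolding dist_def by (rule Inf_lengths_snoc) (use gpath_nonempty in blast)
qed

lemma dist_del_add_leaf_leaf:
  assumes "wf_graph G" "y \<notin> verts G" "a \<noteq> y"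
  shows "dist (del (add_leaf G x y) D) y a = (if y \<in> D then \<infinity> else eSuc (dist (del G D) x a))"
proof (cases "y \<in> D")
  case True
  then show ?thesis
    by (simp add: dist_outside)
next
  case False
  then show ?thesis
    using dist_del_add_leaf_new[OF assms(1,2) False assms(3)] dist_sym by metis
qed

lemma half_pow_infinity [simp]: "half_pow \<infinity> = 0"
  by (simp add: half_pow_def)

lemma half_pow_enat [simp]: "half_pow (enat n) = (1/2) ^ n"
  by (simp add: half_pow_def)

lemma half_pow_0 [simp]: "half_pow 0 = 1"
  by (simp add: half_pow_def zero_enat_def)

lemma half_pow_eSuc: "half_pow (eSuc e) = half_pow e / 2"
  by (cases e) (auto simp: eSuc_enat)

lemma half_pow_nonneg: "0 \<le> half_pow e"
  by (cases e) auto

lemma half_pow_antimono: "d \<le> d' \<Longrightarrow> half_pow d' \<le> half_pow d"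
  by (cases d; cases d') (auto simp: power_decreasing)

definition admissible :: "'a set \<Rightarrow> 'a list \<Rightarrow> bool" where
  "admissible D p \<longleftrightarrow> card ({hd p, last p} \<inter> D) = 1 \<and> set (butlast (tl p)) \<inter> D = {}"

lemma set_butlast_tl: "set (butlast (tl p)) = {p ! i | i. 0 < i \<and> Suc i < length p}"
proof (cases p)
  case (Cons a r)
  have "set (butlast r) = {r ! j | j. j < length r - 1}"
    by (smt (verit, best) Collect_cong length_butlast nth_butlast set_conv_nth)
  also have "\<dots> = {p ! i | i. 0 < i \<and> Suc i < length p}"
  proof (intro equalityI subsetI)
    fix b assume "b \<in> {r ! j | j. j < length r - 1}"
    then obtain j where "j < length r - 1" "b = p ! Suc j"
      using Cons by auto
    then show "b \<in> {p ! i | i. 0 < i \<and> Suc i < length p}"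
      using Cons by fastforce
  next
    fix b assume "b \<in> {p ! i | i. 0 < i \<and> Suc i < length p}"
    then obtain j where "Suc (Suc j) < length p" "b = p ! Suc j"
      by (auto simp: gr0_conv_Suc)
    then show "b \<in> {r ! j | j. j < length r - 1}"
      using Cons by auto
  qed
  finally show ?thesis
    using Cons by simp
qed simp

lemma distD_admissible:
  "distD G D u v = Inf {enat (length p - 1) | p. gpath G p \<and> hd p = u \<and> last p = v \<and> admissible D p}"
proof -
  have "(\<forall>i. 0 < i \<and> Suc i < length p \<longrightarrow> p ! i \<notin> D) \<longleftrightarrow> set (butlast (tl p)) \<inter> D = {}" for p
    unfolding set_butlast_tl by blast
  then show ?thesis
    unfolding distD_def admissible_def by simp
qed

lemma admissible_cong:
  "p \<noteq> [] \<Longrightarrow> set p \<inter> D = set p \<inter> D' \<Longrightarrow> admissible D p \<longleftrightarrow> admissible D' p"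
proof -
  assume "p \<noteq> []" "set p \<inter> D = set p \<inter> D'"
  moreover have "{hd p, last p} \<subseteq> set p" "set (butlast (tl p)) \<subseteq> set p"
    using \<open>p \<noteq> []\<close> by (auto dest: in_set_butlastD list.set_sel(2))
  ultimately have "{hd p, last p} \<inter> D = {hd p, last p} \<inter> D'"
    "set (butlast (tl p)) \<inter> D = set (butlast (tl p)) \<inter> D'"
    by blast+
  then show ?thesis
    unfolding admissible_def by simp
qed

lemma admissible_rev: "admissible D (rev p) \<longleftrightarrow> admissible D p"
proof (cases "p = []")
  case False
  have "butlast (tl (rev p)) = rev (butlast (tl p))"
    by (metis butlast_rev butlast_tl rev_swap)
  then show ?thesis
    using False unfolding admissible_def by (simp add: hd_rev last_rev insert_commute)
qed simp

lemma admissible_hd_in: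
  assumes "hd p \<in> D" "distinct p" "p \<noteq> []"
  shows "admissible D p \<longleftrightarrow> set (tl p) \<inter> D = {}"
proof (cases "tl p = []")
  case True
  then obtain a where "p = [a]"
    using assms(3) by (cases p) auto
  then show ?thesis
    using assms(1) unfolding admissible_def by simp
next
  case False
  have "last p \<in> set (tl p)" "last p = last (tl p)"
    using False assms(3) by (metis last_in_set last_tl)+
  then have "hd p \<noteq> last p"
    using assms(2,3) by (metis distinct.simps(2) list.collapse)
  moreover have "set (tl p) = insert (last p) (set (butlast (tl p)))"
    using False \<open>last p = last (tl p)\<close> by (metis append_butlast_last_id set_append
      Un_insert_right empty_set list.simps(15) sup_bot.right_neutral)
  ultimately show ?thesis
    using assms(1) unfolding admissible_def by (cases "last p \<in> D") auto
qed

lemma admissible_snoc_in: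
  assumes "q \<noteq> []" "distinct (q @ [y])" "y \<in> D"
  shows "admissible D (q @ [y]) \<longleftrightarrow> set q \<inter> D = {}"
proof -
  have "admissible D (q @ [y]) \<longleftrightarrow> admissible D (y # rev q)"
    using admissible_rev[of D "y # rev q"] by simp
  also have "\<dots> \<longleftrightarrow> set q \<inter> D = {}"
    using assms by (subst admissible_hd_in) auto
  finally show ?thesis .
qed

lemma admissible_snoc_out:
  assumes "q \<noteq> []" "distinct (q @ [y])" "y \<notin> D" "hd q \<in> D"
  shows "admissible D (q @ [y]) \<longleftrightarrow> admissible D q"
  using assms admissible_hd_in[of "q @ [y]" D] admissible_hd_in[of q D] by auto

lemma distD_sym_le: "distD G D v u \<le> distD G D u v"
  unfolding distD_admissible
proof (rule Inf_superset_mono, clarify)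
  fix p assume p: "gpath G p" "u = hd p" "v = last p" "admissible D p"
  then have "gpath G (rev p)" "hd (rev p) = last p" "last (rev p) = hd p" "admissible D (rev p)"
    using gpath_rev[OF p(1)] gpath_nonempty[OF p(1)] admissible_rev[of D p]
    by (simp_all add: hd_rev last_rev)
  then show "\<exists>q. enat (length p - 1) = enat (length q - 1) \<and> gpath G q \<and> hd q = last p \<and>
      last q = hd p \<and> admissible D q"
    by (intro exI[of _ "rev p"]) simp
qed

lemma distD_sym: "distD G D u v = distD G D v u"
  using distD_sym_le[of G D u v] distD_sym_le[of G D v u] by simp

lemma distD_self: "u \<in> D \<Longrightarrow> u \<in> verts G \<Longrightarrow> distD G D u u = 0"
proof -
  assume "u \<in> D" "u \<in> verts G"
  then have "enat (length [u] - 1) \<in>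
      {enat (length p - 1) | p. gpath G p \<and> hd p = u \<and> last p = u \<and> admissible D p}"
    by (intro CollectI exI[of _ "[u]"]) (simp add: gpath_singleton admissible_def)
  then have "distD G D u u \<le> 0"
    unfolding distD_admissible by (simp add: Inf_lower zero_enat_def)
  then show ?thesis
    by simp
qed

lemma distD_between_D: "u \<in> D \<Longrightarrow> v \<in> D \<Longrightarrow> u \<noteq> v \<Longrightarrow> distD G D u v = \<infinity>"
proof -
  assume "u \<in> D" "v \<in> D" "u \<noteq> v"
  then have E: "{enat (length p - 1) | p. gpath G p \<and> hd p = u \<and> last p = v \<and> admissible D p} = {}"
    unfolding admissible_def by auto
  show ?thesis
    unfolding distD_admissible E by (simp add: top_enat_def)
qed

lemma distD_edge:
  assumes "{u, v} \<in> edges G" "u \<in> verts G" "v \<in> verts G" "u \<notin> D" "v \<in> D"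
  shows "distD G D u v \<le> 1"
proof -
  have "gpath G [u, v]"
    using assms unfolding gpath_def by (auto simp: less_Suc_eq)
  moreover have "admissible D [u, v]"
    using assms unfolding admissible_def by auto
  ultimately have "enat (length [u, v] - 1) \<in>
      {enat (length p - 1) | p. gpath G p \<and> hd p = u \<and> last p = v \<and> admissible D p}"
    by (intro CollectI exI[of _ "[u, v]"]) simp
  then show ?thesis
    unfolding distD_admissible by (simp add: Inf_lower one_enat_def)
qed

lemma distD_add_leaf_old:
  assumes G: "wf_graph G" "y \<notin> verts G" and "u \<noteq> y" "v \<noteq> y"
  shows "distD (add_leaf G x y) D u v = distD G (D - {y}) u v"
proof -
  have "gpath (add_leaf G x y) p \<and> hd p = u \<and> last p = v \<and> admissible D p \<longleftrightarrow>
      gpath G p \<and> hd p = u \<and> last p = v \<and> admissible (D - {y}) p" for p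
  proof (cases "gpath G p")
    case True
    then have "admissible D p \<longleftrightarrow> admissible (D - {y}) p"
      using G(2) gpath_nonempty[OF True] unfolding gpath_def
      by (intro admissible_cong) auto
    then show ?thesis
      using gpath_add_leaf_old_ends[OF G, of p x] assms(3,4) by auto
  next
    case False
    then show ?thesis
      using gpath_add_leaf_old_ends[OF G, of p x] assms(3,4) by auto
  qed
  then show ?thesis
    unfolding distD_admissible by simp
qed

lemma distD_add_leaf_leaf_in:
  assumes G: "wf_graph G" "y \<notin> verts G" and u: "u \<noteq> y" and y: "y \<in> D"
  shows "distD (add_leaf G x y) D u y = eSuc (dist (del G (D - {y})) u x)"
proof -
  have adm: "admissible D (q @ [y]) \<longleftrightarrow> set q \<inter> (D - {y}) = {}" if "gpath G q" for q
  proof -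
    have "distinct (q @ [y])" "q \<noteq> []"
      using that G(2) unfolding gpath_def by auto
    then show ?thesis
      using admissible_snoc_in[of q y D] y by auto
  qed
  have "gpath (add_leaf G x y) p \<and> hd p = u \<and> last p = y \<and> admissible D p \<longleftrightarrow>
      (\<exists>q. p = q @ [y] \<and> gpath (del G (D - {y})) q \<and> hd q = u \<and> last q = x)" for p
  proof
    assume p: "gpath (add_leaf G x y) p \<and> hd p = u \<and> last p = y \<and> admissible D p"
    then obtain q where q: "p = q @ [y]" "gpath G q" "last q = x"
      using gpath_add_leaf_to_leaf[OF G, of p x] u by auto
    then show "\<exists>q. p = q @ [y] \<and> gpath (del G (D - {y})) q \<and> hd q = u \<and> last q = x"
      using p adm[OF q(2)] gpath_nonempty[OF q(2)] by (auto simp: gpath_del)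
  next
    assume "\<exists>q. p = q @ [y] \<and> gpath (del G (D - {y})) q \<and> hd q = u \<and> last q = x"
    then obtain q where q: "p = q @ [y]" "gpath G q" "set q \<inter> (D - {y}) = {}" "hd q = u" "last q = x"
      by (auto simp: gpath_del)
    then have "hd p = u"
      using gpath_nonempty[OF q(2)] by simp
    then have "gpath (add_leaf G x y) p \<and> last p = y"
      using gpath_add_leaf_to_leaf[OF G, of p x] q u by blast
    then show "gpath (add_leaf G x y) p \<and> hd p = u \<and> last p = y \<and> admissible D p"
      using \<open>hd p = u\<close> adm[OF q(2)] q by simp
  qed
  then show ?thesis
    unfolding distD_admissible dist_def
    by (rule Inf_lengths_snoc) (use gpath_nonempty in blast)
qed

lemma distD_add_leaf_leaf_out:
  assumes G: "wf_graph G" "y \<notin> verts G" and v: "v \<in> D" and y: "y \<notin> D"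
  shows "distD (add_leaf G x y) D v y = eSuc (distD G D v x)"
proof -
  have "v \<noteq> y"
    using v y by auto
  have adm: "admissible D (q @ [y]) \<longleftrightarrow> admissible D q" if "gpath G q" "hd q = v" for q
  proof -
    have "distinct (q @ [y])" "q \<noteq> []"
      using that G(2) unfolding gpath_def by auto
    then show ?thesis
      using admissible_snoc_out[of q y D] y v that(2) by auto
  qed
  have "gpath (add_leaf G x y) p \<and> hd p = v \<and> last p = y \<and> admissible D p \<longleftrightarrow>
      (\<exists>q. p = q @ [y] \<and> gpath G q \<and> hd q = v \<and> last q = x \<and> admissible D q)" for p
  proof
    assume p: "gpath (add_leaf G x y) p \<and> hd p = v \<and> last p = y \<and> admissible D p"
    then obtain q where q: "p = q @ [y]" "gpath G q" "last q = x"
      using gpath_add_leaf_to_leaf[OF G, of p x] \<open>v \<noteq> y\<close> by auto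
    moreover have "hd q = v"
      using p q gpath_nonempty[OF q(2)] by simp
    ultimately show "\<exists>q. p = q @ [y] \<and> gpath G q \<and> hd q = v \<and> last q = x \<and> admissible D q"
      using p adm by blast
  next
    assume "\<exists>q. p = q @ [y] \<and> gpath G q \<and> hd q = v \<and> last q = x \<and> admissible D q"
    then obtain q where q: "p = q @ [y]" "gpath G q" "hd q = v" "last q = x" "admissible D q"
      by blast
    then have "hd p = v"
      using gpath_nonempty[OF q(2)] by simp
    then have "gpath (add_leaf G x y) p \<and> last p = y"
      using gpath_add_leaf_to_leaf[OF G, of p x] q \<open>v \<noteq> y\<close> by blast
    then show "gpath (add_leaf G x y) p \<and> hd p = v \<and> last p = y \<and> admissible D p"
      using \<open>hd p = v\<close> adm[OF q(2,3)] q by simp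
  qed
  then show ?thesis
    unfolding distD_admissible
    by (rule Inf_lengths_snoc) (use gpath_nonempty in blast)
qed

lemma wgt_in_D:
  assumes "finite D" "D \<subseteq> verts G" "u \<in> D"
  shows "wgt G D u = 2"
proof -
  have "wgt G D u = 2 * half_pow (distD G D u u) + (\<Sum>v\<in>D - {u}. 2 * half_pow (distD G D u v))"
    unfolding wgt_def using assms by (simp add: sum.remove)
  moreover have "distD G D u u = 0"
    using assms by (intro distD_self) auto
  moreover have "distD G D u v = \<infinity>" if "v \<in> D - {u}" for v
    using that assms(3) by (intro distD_between_D) auto
  ultimately show ?thesis
    by simp
qed

lemma wgt_add_leaf_old:
  assumes G: "wf_graph G" "y \<notin> verts G" and D: "finite D" and u: "u \<in> verts G"
  shows "wgt (add_leaf G x y) D u =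
    wgt G (D - {y}) u + (if y \<in> D then half_pow (dist (del G (D - {y})) x u) else 0)"
proof -
  have uy: "u \<noteq> y"
    using u G(2) by auto
  have old: "(\<Sum>v\<in>D - {y}. 2 * half_pow (distD (add_leaf G x y) D u v)) = wgt G (D - {y}) u"
    unfolding wgt_def using distD_add_leaf_old[OF G uy] by (intro sum.cong) auto
  show ?thesis
  proof (cases "y \<in> D")
    case True
    have "wgt (add_leaf G x y) D u = 2 * half_pow (distD (add_leaf G x y) D u y)
        + (\<Sum>v\<in>D - {y}. 2 * half_pow (distD (add_leaf G x y) D u v))"
      unfolding wgt_def using True D by (simp add: sum.remove)
    moreover have "2 * half_pow (distD (add_leaf G x y) D u y) = half_pow (dist (del G (D - {y})) x u)"
      using distD_add_leaf_leaf_in[OF G uy True] dist_sym[of _ u x] by (simp add: half_pow_eSuc)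
    ultimately show ?thesis
      using old True by simp
  next
    case False
    then show ?thesis
      using old unfolding wgt_def by simp
  qed
qed

lemma wgt_add_leaf_le:
  assumes "wf_graph G" "y \<notin> verts G" "finite D" "u \<in> verts G"
  shows "wgt (add_leaf G x y) D u \<le> wgt G (D - {y}) u + half_pow (dist (del G (D - {y})) x u)"
  using wgt_add_leaf_old[OF assms, of x] half_pow_nonneg[of "dist (del G (D - {y})) x u"]
  by (cases "y \<in> D") simp_all

lemma wgt_add_leaf_not_in:
  assumes "wf_graph G" "y \<notin> verts G" "finite D" "u \<in> verts G" "y \<notin> D"
  shows "wgt (add_leaf G x y) D u = wgt G D u"
  using wgt_add_leaf_old[OF assms(1-4), of x] assms(5) by simp

lemma wgt_add_leaf_leaf:
  assumes G: "wf_graph G" "y \<notin> verts G" and y: "y \<notin> D"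
  shows "wgt (add_leaf G x y) D y = wgt G D x / 2"
proof -
  have "2 * half_pow (distD (add_leaf G x y) D y v) = 2 * half_pow (distD G D x v) / 2" if "v \<in> D" for v
    using distD_add_leaf_leaf_out[OF G that y] distD_sym[of _ D y v] distD_sym[of G D v x]
    by (simp add: half_pow_eSuc)
  then show ?thesis
    unfolding wgt_def by (simp add: sum_divide_distrib)
qed

lemma dominating_exp_dom:
  assumes fin: "finite (verts G)" and dom: "dominating G D"
  shows "exp_dom G D"
proof -
  have DV: "D \<subseteq> verts G" and finD: "finite D"
    using dom fin finite_subset unfolding dominating_def by blast+
  have "1 \<le> wgt G D u" if u: "u \<in> verts G" for u
  proof (cases "u \<in> D")
    case True
    then show ?thesis
      using wgt_in_D[OF finD DV] by simp
  next
    case False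
    then obtain v where v: "v \<in> D" "{v, u} \<in> edges G"
      using dom u unfolding dominating_def by blast
    have "distD G D u v \<le> 1"
      using v u False DV by (intro distD_edge) (auto simp: insert_commute)
    then have "1 \<le> 2 * half_pow (distD G D u v)"
      using half_pow_antimono[of "distD G D u v" 1] by (simp add: one_enat_def)
    also have "\<dots> \<le> wgt G D u"
      unfolding wgt_def using finD v(1) by (intro member_le_sum) (auto simp: half_pow_nonneg)
    finally show ?thesis .
  qed
  then show ?thesis
    using DV unfolding exp_dom_def by blast
qed

lemma gamma_le_card: "dominating G D \<Longrightarrow> gamma G \<le> card D"
  unfolding gamma_def by (rule Least_le) blast

lemma gamma_e_le_card: "exp_dom G D \<Longrightarrow> gamma_e G \<le> card D"
  unfolding gamma_e_def by (rule Least_le) blast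

lemma dominating_verts: "dominating G (verts G)"
  unfolding dominating_def by auto

lemma obtain_min_dominating:
  obtains D where "dominating G D" "card D = gamma G"
proof -
  have "\<exists>k D. dominating G D \<and> card D = k"
    using dominating_verts by blast
  then have "\<exists>D. dominating G D \<and> card D = gamma G"
    unfolding gamma_def by (rule LeastI_ex)
  then show ?thesis
    using that by blast
qed

lemma obtain_min_exp_dom:
  assumes "finite (verts G)"
  obtains D where "exp_dom G D" "card D = gamma_e G"
proof -
  have "\<exists>k D. exp_dom G D \<and> card D = k"
    using dominating_exp_dom[OF assms dominating_verts] by blast
  then have "\<exists>D. exp_dom G D \<and> card D = gamma_e G"
    unfolding gamma_e_def by (rule LeastI_ex)
  then show ?thesis
    using that by blast
qed

lemma gamma_e_le_gamma:
  assumes "finite (verts G)"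
  shows "gamma_e G \<le> gamma G"
proof -
  obtain D where "dominating G D" "card D = gamma G"
    by (rule obtain_min_dominating)
  then show ?thesis
    using gamma_e_le_card[OF dominating_exp_dom[OF assms \<open>dominating G D\<close>]] by simp
qed

lemma obtain_min_gammaX:
  assumes "X \<subseteq> verts G"
  obtains D where "D \<subseteq> verts G" "card D = gammaX G X" "\<forall>v \<in> X - D. \<exists>u \<in> D. {u, v} \<in> edges G"
proof -
  have "\<exists>k D. D \<subseteq> verts G \<and> card D = k \<and> (\<forall>v \<in> X - D. \<exists>u \<in> D. {u, v} \<in> edges G)"
    using assms by (intro exI[of _ "card (verts G)"] exI[of _ "verts G"]) auto
  then have "\<exists>D. D \<subseteq> verts G \<and> card D = gammaX G X \<and> (\<forall>v \<in> X - D. \<exists>u \<in> D. {u, v} \<in> edges G)"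
    unfolding gammaX_def by (rule LeastI_ex)
  then show ?thesis
    using that by blast
qed

definition boost_dom :: "'a graph \<Rightarrow> 'a set \<Rightarrow> 'a \<Rightarrow> real \<Rightarrow> bool" where
  "boost_dom G D x t \<longleftrightarrow> (\<forall>u \<in> verts G - D. 1 \<le> wgt G D u + half_pow (dist (del G D) x u) * t)"

text \<open>No hypothesis \<open>w \<notin> D\<close> is needed: for \<open>w \<in> D\<close> the condition makes \<open>D\<close> itself
  exponentially dominating, contradicting \<open>card D < gamma_e G\<close>.\<close>
lemma tau_le:
  assumes fin: "finite (verts G)" and D: "D \<subseteq> verts G" "card D < gamma_e G"
    and w: "boost_dom G D w t"
  shows "tau G w \<le> t"
proof (cases "w \<in> D")
  case True
  have "1 \<le> wgt G D u" if "u \<in> verts G" for u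
  proof (cases "u \<in> D")
    case True
    then show ?thesis
      using wgt_in_D[OF finite_subset[OF D(1) fin] D(1)] by simp
  next
    case False
    then have "1 \<le> wgt G D u + half_pow (dist (del G D) w u) * t"
      using w that unfolding boost_dom_def by blast
    moreover have "dist (del G D) w u = \<infinity>"
      using \<open>w \<in> D\<close> by (simp add: dist_outside)
    ultimately show ?thesis
      by simp
  qed
  then have "gamma_e G \<le> card D"
    using D(1) by (intro gamma_e_le_card) (simp add: exp_dom_def)
  then show ?thesis
    using D(2) by simp
next
  case False
  then have "\<exists>D. D \<subseteq> verts G \<and> card D < gamma_e G \<and> w \<notin> D \<and>
      (\<forall>u \<in> verts G - D. wgt G D u + half_pow (dist (del G D) w u) * t \<ge> 1)"
    using D w unfolding boost_dom_def by (intro exI[of _ D]) simp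
  then have "ereal t \<in> {ereal t | t. \<exists>D. D \<subseteq> verts G \<and> card D < gamma_e G \<and> w \<notin> D \<and>
      (\<forall>u \<in> verts G - D. wgt G D u + half_pow (dist (del G D) w u) * t \<ge> 1)}"
    by blast
  then show ?thesis
    unfolding tau_def by (rule Inf_lower)
qed

subsection \<open>Trees grown by adding leaves\<close>

inductive_set leaf_trees :: "'a graph set" where
  single: "({v}, {}) \<in> leaf_trees"
| add_leaf: "G \<in> leaf_trees \<Longrightarrow> x \<in> verts G \<Longrightarrow> y \<notin> verts G \<Longrightarrow> add_leaf G x y \<in> leaf_trees"

lemma leaf_trees_wf: "G \<in> leaf_trees \<Longrightarrow> wf_graph G \<and> finite (verts G)"
  by (induction rule: leaf_trees.induct) (auto simp: wf_graph_def)

lemma degree_add_leaf: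
  assumes G: "wf_graph G" "finite (verts G)" "y \<notin> verts G" and a: "a \<in> verts G"
  shows "degree (add_leaf G x y) a = degree G a + (if a = x then 1 else 0)"
proof -
  have "{y, a} \<notin> edges G"
    using G(1,3) unfolding wf_graph_def by auto
  then have "{u \<in> insert y (verts G). {u, a} \<in> insert {x, y} (edges G)} =
      (if a = x then insert y else id) {u \<in> verts G. {u, a} \<in> edges G}"
    using G(3) a by (auto simp: doubleton_eq_iff insert_commute)
  then show ?thesis
    using G(2,3) unfolding degree_def by simp
qed

lemma degree_add_leaf_leaf:
  assumes "wf_graph G" "y \<notin> verts G" "x \<in> verts G"
  shows "degree (add_leaf G x y) y = 1"
proof -
  have "{u \<in> insert y (verts G). {u, y} \<in> insert {x, y} (edges G)} = {x}"
    using assms unfolding wf_graph_def by (auto simp: doubleton_eq_iff)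
  then show ?thesis
    unfolding degree_def by simp
qed

lemma subcubic_add_leaf_iff:
  assumes G: "wf_graph G" "finite (verts G)" "y \<notin> verts G" and x: "x \<in> verts G"
  shows "subcubic (add_leaf G x y) \<longleftrightarrow> subcubic G \<and> degree G x \<le> 2"
  using degree_add_leaf[OF G] degree_add_leaf_leaf[OF G(1,3) x] x
  unfolding subcubic_def by force

lemma subcubic_add_leafD:
  assumes "G \<in> leaf_trees" "x \<in> verts G" "y \<notin> verts G" "subcubic (add_leaf G x y)"
  shows "subcubic G" "degree G x \<le> 2"
  using subcubic_add_leaf_iff[of G y x] leaf_trees_wf[OF assms(1)] assms(2-4) by auto

subsection \<open>The weight identity\<close>

definition slack :: "'a graph \<Rightarrow> 'a set \<Rightarrow> 'a \<Rightarrow> real" where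
  "slack G D w = (\<Sum>a \<in> verts G - D. (3 - real (degree G a)) * half_pow (dist (del G D) w a))"

lemma sum_degree_add_leaf:
  assumes G: "wf_graph G" "finite (verts G)" "y \<notin> verts G" and x: "x \<in> verts G"
    and fx: "x \<in> D \<Longrightarrow> f x = 0"
  shows "(\<Sum>a \<in> verts G - D. (3 - real (degree (add_leaf G x y) a)) * f a) =
    (\<Sum>a \<in> verts G - D. (3 - real (degree G a)) * f a) - f x"
proof -
  have "(\<Sum>a \<in> verts G - D. (3 - real (degree (add_leaf G x y) a)) * f a) =
      (\<Sum>a \<in> verts G - D. (3 - real (degree G a)) * f a - (if a = x then f a else 0))"
    using degree_add_leaf[OF G] by (intro sum.cong) (auto simp: algebra_simps)
  also have "\<dots> = (\<Sum>a \<in> verts G - D. (3 - real (degree G a)) * f a) - f x"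
    using G(2) x fx by (simp add: sum_subtractf sum.delta)
  finally show ?thesis .
qed

lemma del_add_leaf_leaf_in:
  assumes "wf_graph G" "y \<notin> verts G" "y \<in> D"
  shows "del (add_leaf G x y) D = del G (D - {y})"
  using assms unfolding del_def wf_graph_def by auto

lemma slack_add_leaf_in:
  assumes G: "wf_graph G" "finite (verts G)" "y \<notin> verts G" and x: "x \<in> verts G"
    and y: "y \<in> D"
  shows "slack (add_leaf G x y) D w = slack G (D - {y}) w - half_pow (dist (del G (D - {y})) w x)"
proof -
  have V: "verts (add_leaf G x y) - D = verts G - (D - {y})"
    using y G(3) by auto
  show ?thesis
    unfolding slack_def del_add_leaf_leaf_in[OF G(1,3) y] V
    by (intro sum_degree_add_leaf[OF G x]) (simp add: dist_outside dist_sym[of _ w])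
qed

lemma slack_add_leaf_not_in:
  assumes G: "wf_graph G" "finite (verts G)" "y \<notin> verts G" and x: "x \<in> verts G"
    and y: "y \<notin> D" and w: "w \<in> verts G"
  shows "slack (add_leaf G x y) D w = slack G D w"
proof -
  let ?G' = "add_leaf G x y"
  have wy: "w \<noteq> y"
    using w G(3) by auto
  have "slack ?G' D w = (3 - real (degree ?G' y)) * half_pow (dist (del ?G' D) w y)
      + (\<Sum>a \<in> verts G - D. (3 - real (degree ?G' a)) * half_pow (dist (del ?G' D) w a))"
    unfolding slack_def using y G(2,3) by (simp add: insert_Diff_if)
  also have "(3 - real (degree ?G' y)) * half_pow (dist (del ?G' D) w y) =
      half_pow (dist (del G D) w x)"
    using degree_add_leaf_leaf[OF G(1,3) x] dist_del_add_leaf_new[OF G(1,3) y wy]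
    by (simp add: half_pow_eSuc)
  also have "(\<Sum>a \<in> verts G - D. (3 - real (degree ?G' a)) * half_pow (dist (del ?G' D) w a)) =
      (\<Sum>a \<in> verts G - D. (3 - real (degree ?G' a)) * half_pow (dist (del G D) w a))"
  proof (intro sum.cong refl)
    fix a assume "a \<in> verts G - D"
    then have "a \<noteq> y"
      using G(3) by auto
    then show "(3 - real (degree ?G' a)) * half_pow (dist (del ?G' D) w a) =
        (3 - real (degree ?G' a)) * half_pow (dist (del G D) w a)"
      using dist_del_add_leaf_old[OF G(1,3) wy, of a x D] by simp
  qed
  also have "\<dots> = slack G D w - half_pow (dist (del G D) w x)"
    unfolding slack_def by (intro sum_degree_add_leaf[OF G x]) (simp add: dist_outside dist_sym[of _ w])
  finally show ?thesis
    by simp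
qed

lemma slack_add_leaf_leaf:
  assumes G: "wf_graph G" "finite (verts G)" "y \<notin> verts G" and x: "x \<in> verts G"
    and y: "y \<notin> D"
  shows "slack (add_leaf G x y) D y = 2 + (slack G D x - half_pow (dist (del G D) x x)) / 2"
proof -
  let ?G' = "add_leaf G x y"
  have "slack ?G' D y = (3 - real (degree ?G' y)) * half_pow (dist (del ?G' D) y y)
      + (\<Sum>a \<in> verts G - D. (3 - real (degree ?G' a)) * half_pow (dist (del ?G' D) y a))"
    unfolding slack_def using y G(2,3) by (simp add: insert_Diff_if)
  also have "(3 - real (degree ?G' y)) * half_pow (dist (del ?G' D) y y) = 2"
    using degree_add_leaf_leaf[OF G(1,3) x] y by (simp add: dist_self)
  also have "(\<Sum>a \<in> verts G - D. (3 - real (degree ?G' a)) * half_pow (dist (del ?G' D) y a)) =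
      (\<Sum>a \<in> verts G - D. (3 - real (degree ?G' a)) * (half_pow (dist (del G D) x a) / 2))"
  proof (intro sum.cong refl)
    fix a assume "a \<in> verts G - D"
    then have "a \<noteq> y"
      using G(3) by auto
    then show "(3 - real (degree ?G' a)) * half_pow (dist (del ?G' D) y a) =
        (3 - real (degree ?G' a)) * (half_pow (dist (del G D) x a) / 2)"
      using dist_del_add_leaf_leaf[OF G(1,3) \<open>a \<noteq> y\<close>, of x D] y by (simp add: half_pow_eSuc)
  qed
  also have "\<dots> = (\<Sum>a \<in> verts G - D. (3 - real (degree G a)) * (half_pow (dist (del G D) x a) / 2))
      - half_pow (dist (del G D) x x) / 2"
    by (intro sum_degree_add_leaf[OF G x]) (simp add: dist_outside)
  also have "(\<Sum>a \<in> verts G - D. (3 - real (degree G a)) * (half_pow (dist (del G D) x a) / 2)) =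
      slack G D x / 2"
    unfolding slack_def by (simp add: sum_divide_distrib)
  finally show ?thesis
    by simp
qed

lemma slack_outside: "w \<in> D \<Longrightarrow> slack G D w = 0"
  unfolding slack_def by (simp add: dist_outside)

lemma wgt_plus_slack_add_leaf_leaf:
  assumes G: "wf_graph G" "finite (verts G)" "y \<notin> verts G" and x: "x \<in> verts G"
    and D: "D \<subseteq> verts G" and IH: "x \<notin> D \<Longrightarrow> wgt G D x + slack G D x = 3"
  shows "wgt (add_leaf G x y) D y + slack (add_leaf G x y) D y = 3"
proof -
  have y: "y \<notin> D"
    using D G(3) by auto
  note leaf = slack_add_leaf_leaf[OF G x y] wgt_add_leaf_leaf[OF G(1,3) y, of x]
  show ?thesis
  proof (cases "x \<in> D")
    case True
    then show ?thesis
      using leaf wgt_in_D[OF finite_subset[OF D G(2)] D True] slack_outside[OF True, of G]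
      by (simp add: dist_outside)
  next
    case False
    then show ?thesis
      using leaf IH x by (simp add: dist_self field_simps)
  qed
qed

theorem wgt_plus_slack:
  assumes "G \<in> leaf_trees" "D \<subseteq> verts G" "w \<in> verts G - D"
  shows "wgt G D w + slack G D w = 3"
  using assms
proof (induction arbitrary: D w rule: leaf_trees.induct)
  case (single v)
  then have "D = {}" "w = v"
    by auto
  then show ?case
    unfolding wgt_def slack_def degree_def by (simp add: dist_self)
next
  case (add_leaf G x y D w)
  have G: "wf_graph G" "finite (verts G)" "y \<notin> verts G"
    using leaf_trees_wf[OF add_leaf.hyps(1)] add_leaf.hyps(3) by auto
  have finD: "finite D"
    using add_leaf.prems(1) G(2) finite_subset by auto
  consider (in_D) "y \<in> D" | (old) "y \<notin> D" "w \<noteq> y" | (leaf) "y \<notin> D" "w = y"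
    by blast
  then show ?case
  proof cases
    case in_D
    then show ?thesis
      using add_leaf.IH[of "D - {y}" w] add_leaf.prems slack_add_leaf_in[OF G add_leaf.hyps(2) in_D]
        wgt_add_leaf_old[OF G(1,3) finD] dist_sym[of _ w x]
      by auto
  next
    case old
    then show ?thesis
      using add_leaf.IH[of D w] add_leaf.prems slack_add_leaf_not_in[OF G add_leaf.hyps(2) old(1)]
        wgt_add_leaf_not_in[OF G(1,3) finD _ old(1)]
      by auto
  next
    case leaf
    then have "D \<subseteq> verts G"
      using add_leaf.prems(1) by auto
    then show ?thesis
      using wgt_plus_slack_add_leaf_leaf[OF G add_leaf.hyps(2)] add_leaf.IH[of D x] add_leaf.hyps(2) leaf
      by simp
  qed
qed

lemma wgt_le_3:
  assumes G: "G \<in> leaf_trees" "subcubic G" and D: "D \<subseteq> verts G" and u: "u \<in> verts G"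
  shows "wgt G D u \<le> 3"
proof (cases "u \<in> D")
  case True
  have "finite D"
    using D leaf_trees_wf[OF G(1)] finite_subset by blast
  then show ?thesis
    using wgt_in_D[OF _ D True] by simp
next
  case False
  have "0 \<le> slack G D u"
    using G(2) unfolding slack_def subcubic_def by (intro sum_nonneg) (simp add: half_pow_nonneg)
  then show ?thesis
    using wgt_plus_slack[OF G(1) D] u False by fastforce
qed

lemma wgt_insert_ge:
  assumes G: "G \<in> leaf_trees" "subcubic G" and D: "D \<subseteq> verts G"
    and w: "w \<in> verts G - D" and u: "u \<in> verts G - D" "u \<noteq> w"
  shows "wgt G D u + (3 - real (degree G w)) * half_pow (dist (del G D) w u) \<le> wgt G (insert w D) u"
proof -
  let ?c = "\<lambda>a. 3 - real (degree G a)"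
  have fin: "finite (verts G)"
    using leaf_trees_wf[OF G(1)] by simp
  have "slack G D u = ?c w * half_pow (dist (del G D) u w)
      + (\<Sum>a \<in> verts G - D - {w}. ?c a * half_pow (dist (del G D) u a))"
    unfolding slack_def using fin w by (simp add: sum.remove)
  then have "slack G D u = ?c w * half_pow (dist (del G D) w u)
      + (\<Sum>a \<in> verts G - D - {w}. ?c a * half_pow (dist (del G D) u a))"
    by (simp add: dist_sym[of _ u w])
  moreover have V: "verts G - insert w D = verts G - D - {w}"
    by blast
  moreover have "slack G (insert w D) u \<le> (\<Sum>a \<in> verts G - D - {w}. ?c a * half_pow (dist (del G D) u a))"
    unfolding slack_def V
  proof (rule sum_mono)
    fix a assume "a \<in> verts G - D - {w}"
    then have "0 \<le> ?c a"
      using G(2) unfolding subcubic_def by auto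
    moreover have "half_pow (dist (del G (insert w D)) u a) \<le> half_pow (dist (del G D) u a)"
      by (intro half_pow_antimono dist_del_mono) auto
    ultimately show "?c a * half_pow (dist (del G (insert w D)) u a) \<le> ?c a * half_pow (dist (del G D) u a)"
      by (rule mult_left_mono[rotated])
  qed
  moreover have "wgt G D u + slack G D u = 3" "wgt G (insert w D) u + slack G (insert w D) u = 3"
    using wgt_plus_slack[OF G(1)] D w u by auto
  ultimately show ?thesis
    by linarith
qed

lemma exp_dom_insert:
  assumes G: "G \<in> leaf_trees" "subcubic G" and D: "D \<subseteq> verts G"
    and x: "x \<in> verts G" "degree G x \<le> 2"
    and cover: "boost_dom G D x 1"
  shows "exp_dom G (insert x D)"
proof -
  have xD: "insert x D \<subseteq> verts G"
    using D x by auto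
  have "1 \<le> wgt G (insert x D) u" if u: "u \<in> verts G" for u
  proof (cases "u \<in> insert x D")
    case True
    then show ?thesis
      using wgt_in_D[OF finite_subset[OF xD] xD] leaf_trees_wf[OF G(1)] by simp
  next
    case False
    show ?thesis
    proof (cases "x \<in> D")
      case True
      then show ?thesis
        using cover u False unfolding boost_dom_def by (simp add: insert_absorb dist_outside)
    next
      case xD: False
      have "half_pow (dist (del G D) x u) \<le> (3 - real (degree G x)) * half_pow (dist (del G D) x u)"
        using mult_right_mono[of "real (degree G x)" 2 "half_pow (dist (del G D) x u)"]
          x(2) half_pow_nonneg[of "dist (del G D) x u"] by (simp add: algebra_simps)
      moreover have "1 \<le> wgt G D u + half_pow (dist (del G D) x u)"
        using cover u False unfolding boost_dom_def by simp
      moreover have "wgt G D u + (3 - real (degree G x)) * half_pow (dist (del G D) x u)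
          \<le> wgt G (insert x D) u"
        using u False x xD by (intro wgt_insert_ge[OF G D]) auto
      ultimately show ?thesis
        by linarith
    qed
  qed
  then show ?thesis
    using xD unfolding exp_dom_def by blast
qed

lemma gamma_e_le_Suc_card:
  assumes "G \<in> leaf_trees" "subcubic G" "D \<subseteq> verts G" "x \<in> verts G" "degree G x \<le> 2"
    and "boost_dom G D x 1"
  shows "gamma_e G \<le> card D + 1"
proof -
  have "gamma_e G \<le> card (insert x D)"
    using exp_dom_insert[OF assms] by (rule gamma_e_le_card)
  also have "\<dots> \<le> card D + 1"
    using finite_subset[OF assms(3)] leaf_trees_wf[OF assms(1)] by (simp add: card_insert_if)
  finally show ?thesis .
qed

subsection \<open>Pendant paths\<close>

lemma gamma_le_star_extension:
  assumes "finite (verts G)" "verts G \<subseteq> verts H" "edges G \<subseteq> edges H" "y \<in> verts H"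
    and "\<forall>v \<in> verts H - verts G - {y}. {y, v} \<in> edges H"
  shows "gamma H \<le> gamma G + 1"
proof -
  obtain D where D: "dominating G D" "card D = gamma G"
    by (rule obtain_min_dominating)
  have "dominating H (insert y D)"
    using D(1) assms(2-5) unfolding dominating_def by blast
  then have "gamma H \<le> card (insert y D)"
    by (rule gamma_le_card)
  also have "\<dots> \<le> card D + 1"
  proof -
    have "finite D"
      using D(1) assms(1) finite_subset unfolding dominating_def by blast
    then show ?thesis
      by (simp add: card_insert_if)
  qed
  finally show ?thesis
    using D(2) by simp
qed

lemma pendant_path_wgt_le:
  assumes G: "wf_graph G" "finite (verts G)" "a \<in> verts G" "b \<notin> verts G" "c \<notin> verts G" "b \<noteq> c"
    and D: "finite D" and u: "u \<in> verts G"
  shows "wgt (add_leaf (add_leaf G a b) b c) D u \<le>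
    wgt G (D - {b, c}) u + half_pow (dist (del G (D - {b, c})) a u)"
proof -
  let ?H = "add_leaf G a b" and ?D1 = "D - {c}"
  have H: "wf_graph ?H" "c \<notin> verts ?H"
    using wf_graph_add_leaf[OF G(1,3)] G(5,6) by auto
  have ub: "u \<noteq> b"
    using u G(4) by auto
  have "wgt (add_leaf ?H b c) D u \<le> wgt ?H ?D1 u + half_pow (dist (del ?H ?D1) b u)"
    using wgt_add_leaf_le[OF H D] u by simp
  also have "\<dots> \<le> wgt G (D - {b, c}) u + half_pow (dist (del G (D - {b, c})) a u)"
  proof (cases "b \<in> ?D1")
    case True
    then have "?D1 - {b} = D - {b, c}" "dist (del ?H ?D1) b u = \<infinity>"
      by (auto simp: dist_outside)
    then show ?thesis
      using wgt_add_leaf_le[OF G(1,4) _ u, of ?D1 a] D by simp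
  next
    case False
    then have "?D1 = D - {b, c}"
      by auto
    moreover have "dist (del ?H ?D1) b u = eSuc (dist (del G ?D1) a u)"
      using dist_del_add_leaf_leaf[OF G(1,4), of u a ?D1] ub False by argo
    then have "half_pow (dist (del ?H ?D1) b u) \<le> half_pow (dist (del G ?D1) a u)"
      using half_pow_nonneg[of "dist (del G ?D1) a u"] by (simp add: half_pow_eSuc)
    moreover have "wgt ?H ?D1 u = wgt G ?D1 u"
      using wgt_add_leaf_not_in[OF G(1,4) _ u False, of a] D by simp
    ultimately show ?thesis
      by simp
  qed
  finally show ?thesis .
qed

text \<open>The far end of the path receives at most a quarter of the weight at \<open>a\<close>, which is at most 3.\<close>
lemma pendant_path_hit:
  assumes G: "G \<in> leaf_trees" "subcubic G" "a \<in> verts G" "b \<notin> verts G" "c \<notin> verts G" "b \<noteq> c"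
    and D: "exp_dom (add_leaf (add_leaf G a b) b c) D"
  shows "b \<in> D \<or> c \<in> D"
proof (rule ccontr)
  assume "\<not> (b \<in> D \<or> c \<in> D)"
  then have DG: "D \<subseteq> verts G" and bc: "b \<notin> D" "c \<notin> D"
    using D unfolding exp_dom_def by auto
  have wf: "wf_graph G"
    using leaf_trees_wf[OF G(1)] by simp
  have wfH: "wf_graph (add_leaf G a b)" "c \<notin> verts (add_leaf G a b)"
    using wf_graph_add_leaf[OF wf G(3)] G(5,6) by auto
  have "wgt (add_leaf (add_leaf G a b) b c) D c = wgt G D a / 4"
    using wgt_add_leaf_leaf[OF wfH bc(2), of b] wgt_add_leaf_leaf[OF wf G(4) bc(1), of a] by simp
  also have "\<dots> < 1"
    using wgt_le_3[OF G(1,2) DG G(3)] by simp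
  finally show False
    using D unfolding exp_dom_def by fastforce
qed

lemma pendant_path_cover:
  assumes G: "G \<in> leaf_trees" "subcubic G" "a \<in> verts G" "b \<notin> verts G" "c \<notin> verts G" "b \<noteq> c"
  obtains D0 where "D0 \<subseteq> verts G" "card D0 < gamma_e (add_leaf (add_leaf G a b) b c)"
    "boost_dom G D0 a 1"
proof -
  let ?T = "add_leaf (add_leaf G a b) b c"
  have fin: "wf_graph G" "finite (verts G)"
    using leaf_trees_wf[OF G(1)] by auto
  obtain D where D: "exp_dom ?T D" "card D = gamma_e ?T"
    using obtain_min_exp_dom[of ?T] fin(2) by auto
  have DT: "D \<subseteq> insert c (insert b (verts G))"
    using D unfolding exp_dom_def by simp
  have finD: "finite D"
    using DT fin(2) finite_subset by auto
  show ?thesis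
  proof
    show "D - {b, c} \<subseteq> verts G"
      using DT by auto
    show "card (D - {b, c}) < gamma_e ?T"
      using pendant_path_hit[OF G D(1)] finD D(2) by (intro psubset_card_mono[THEN less_le_trans]) auto
    show "boost_dom G (D - {b, c}) a 1"
      using D(1) pendant_path_wgt_le[OF fin G(3-6) finD] unfolding exp_dom_def boost_dom_def
      by fastforce
  qed
qed

subsection \<open>The three operations\<close>

lemma op1_gamma_le_gamma_e:
  assumes G: "G \<in> leaf_trees" and x: "x \<in> verts G" and y: "y \<notin> verts G"
    and min: "min_dom_set G Dm" "x \<in> Dm"
    and sc: "subcubic (add_leaf G x y)" and IH: "subcubic G \<Longrightarrow> gamma G \<le> gamma_e G"
  shows "gamma (add_leaf G x y) \<le> gamma_e (add_leaf G x y)"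
proof -
  let ?T = "add_leaf G x y"
  have fin: "wf_graph G" "finite (verts G)"
    using leaf_trees_wf[OF G] by auto
  have sub: "subcubic G" "degree G x \<le> 2"
    using subcubic_add_leafD[OF G x y sc] by auto
  have "dominating ?T Dm"
    using min unfolding min_dom_set_def dominating_def by auto
  then have "gamma ?T \<le> gamma G"
    using gamma_le_card[of ?T Dm] min(1) unfolding min_dom_set_def by simp
  obtain D where D: "exp_dom ?T D" "card D = gamma_e ?T"
    using obtain_min_exp_dom[of ?T] fin(2) by auto
  have DT: "D \<subseteq> insert y (verts G)" and finD: "finite D"
    using D(1) fin(2) finite_subset unfolding exp_dom_def by auto
  have cover: "1 \<le> wgt ?T D u" if "u \<in> verts G" for u
    using D(1) that unfolding exp_dom_def by simp
  have "gamma_e G \<le> card D"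
  proof (cases "y \<in> D")
    case False
    then have "exp_dom G D"
      using DT cover wgt_add_leaf_not_in[OF fin(1) y finD _ False] unfolding exp_dom_def by auto
    then show ?thesis
      by (rule gamma_e_le_card)
  next
    case True
    have "gamma_e G \<le> card (D - {y}) + 1"
      using DT cover wgt_add_leaf_le[OF fin(1) y finD, of _ x]
      by (intro gamma_e_le_Suc_card[OF G sub(1) _ x sub(2)]) (force simp: boost_dom_def)+
    then show ?thesis
      using card_Diff1_less[OF finD True] by linarith
  qed
  then show ?thesis
    using \<open>gamma ?T \<le> gamma G\<close> IH[OF sub(1)] D(2) by simp
qed

lemma gamma_pendant_path_le_gammaX:
  assumes "finite (verts G)" "x \<in> verts G"
  shows "gamma (add_leaf (add_leaf G x y) y z) \<le> gammaX G (verts G - {x}) + 1"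
proof -
  obtain Dx where Dx: "Dx \<subseteq> verts G" "card Dx = gammaX G (verts G - {x})"
    "\<forall>v \<in> verts G - {x} - Dx. \<exists>u \<in> Dx. {u, v} \<in> edges G"
    using obtain_min_gammaX[of "verts G - {x}" G] by auto
  have "dominating (add_leaf (add_leaf G x y) y z) (insert y Dx)"
    using Dx(1,3) assms(2) unfolding dominating_def by (auto simp: insert_commute)
  then have "gamma (add_leaf (add_leaf G x y) y z) \<le> card (insert y Dx)"
    by (rule gamma_le_card)
  also have "\<dots> \<le> gammaX G (verts G - {x}) + 1"
    using Dx(2) finite_subset[OF Dx(1) assms(1)] by (simp add: card_insert_if)
  finally show ?thesis .
qed

lemma op2_gamma_le_gamma_e:
  assumes G: "G \<in> leaf_trees" and x: "x \<in> verts G" and new: "y \<notin> verts G" "z \<notin> verts G" "y \<noteq> z"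
    and cond: "1 < tau G x \<or> gammaX G (verts G - {x}) < gamma G"
    and sc: "subcubic (add_leaf (add_leaf G x y) y z)" and IH: "subcubic G \<Longrightarrow> gamma G \<le> gamma_e G"
  shows "gamma (add_leaf (add_leaf G x y) y z) \<le> gamma_e (add_leaf (add_leaf G x y) y z)"
proof -
  let ?T = "add_leaf (add_leaf G x y) y z"
  have fin: "finite (verts G)"
    using leaf_trees_wf[OF G] by simp
  have "subcubic (add_leaf G x y)"
    using subcubic_add_leafD[OF leaf_trees.add_leaf[OF G x new(1)] _ _ sc] new by simp
  then have sub: "subcubic G" "degree G x \<le> 2"
    using subcubic_add_leafD[OF G x new(1)] by auto
  have eq: "gamma_e G = gamma G"
    using IH[OF sub(1)] gamma_e_le_gamma[OF fin] by simp
  obtain D0 where D0: "D0 \<subseteq> verts G" "card D0 < gamma_e ?T"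
    and cover: "boost_dom G D0 x 1"
    using pendant_path_cover[OF G sub(1) x new] by blast
  have "gamma_e G \<le> gamma_e ?T"
    using gamma_e_le_Suc_card[OF G sub(1) D0(1) x sub(2) cover] D0(2) by simp
  show ?thesis
  proof (cases "gammaX G (verts G - {x}) < gamma G")
    case True
    then show ?thesis
      using gamma_pendant_path_le_gammaX[OF fin x, of y z] eq \<open>gamma_e G \<le> gamma_e ?T\<close> by simp
  next
    case False
    then have tau: "1 < tau G x"
      using cond by simp
    show ?thesis
    proof (rule ccontr)
      assume "\<not> gamma ?T \<le> gamma_e ?T"
      moreover have "gamma ?T \<le> gamma G + 1"
        using fin by (intro gamma_le_star_extension[where y = y]) auto
      ultimately have "card D0 < gamma_e G"
        using D0(2) eq by simp
      then have "tau G x \<le> 1"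
        using tau_le[OF fin D0(1) _ cover] by (simp add: one_ereal_def)
      then show False
        using tau by simp
    qed
  qed
qed

lemma cover_add_leaf_in:
  assumes G: "wf_graph G" "x \<notin> verts G" and D: "finite D" "x \<in> D"
    and cover: "boost_dom (add_leaf G w x) D x 1"
  shows "boost_dom G (D - {x}) w 1"
  unfolding boost_dom_def
proof
  fix u assume u: "u \<in> verts G - (D - {x})"
  then have "1 \<le> wgt (add_leaf G w x) D u"
    using cover G(2) D(2) unfolding boost_dom_def by (auto simp: dist_outside)
  then show "1 \<le> wgt G (D - {x}) u + half_pow (dist (del G (D - {x})) w u) * 1"
    using wgt_add_leaf_le[OF G D(1), of u w] u by simp
qed

lemma cover_add_leaf_not_in:
  assumes G: "wf_graph G" "x \<notin> verts G" and D: "finite D" "x \<notin> D"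
    and cover: "boost_dom (add_leaf G w x) D x 1"
  shows "boost_dom G D w (1/2)"
  unfolding boost_dom_def
proof
  fix u assume u: "u \<in> verts G - D"
  then have "u \<noteq> x"
    using G(2) by auto
  then have "dist (del (add_leaf G w x) D) x u = eSuc (dist (del G D) w u)"
    using dist_del_add_leaf_leaf[OF G, of u w D] D(2) by simp
  moreover have "1 \<le> wgt (add_leaf G w x) D u + half_pow (dist (del (add_leaf G w x) D) x u)"
    using cover u unfolding boost_dom_def by simp
  ultimately show "1 \<le> wgt G D u + half_pow (dist (del G D) w u) * (1/2)"
    using u wgt_add_leaf_not_in[OF G D(1) _ D(2), of u w] by (simp add: half_pow_eSuc)
qed

lemma tau_le_half_add_leaf:
  assumes G: "G \<in> leaf_trees" "subcubic G" and w: "w \<in> verts G" "degree G w \<le> 2"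
    and x: "x \<notin> verts G" and D: "D \<subseteq> verts (add_leaf G w x)" "card D < gamma_e G"
    and cover: "boost_dom (add_leaf G w x) D x 1"
  shows "tau G w \<le> 1/2"
proof -
  have wf: "wf_graph G" and fin: "finite (verts G)"
    using leaf_trees_wf[OF G(1)] by auto
  have finD: "finite D"
    using D(1) fin finite_subset by auto
  show ?thesis
  proof (cases "x \<in> D")
    case True
    have "D - {x} \<subseteq> verts G"
      using D(1) by auto
    then have "gamma_e G \<le> card (D - {x}) + 1"
      using cover_add_leaf_in[OF wf x finD True cover]
      by (intro gamma_e_le_Suc_card[OF G(1,2) _ w])
    then show ?thesis
      using D(2) card_Diff1_less[OF finD True] by linarith
  next
    case False
    then have "D \<subseteq> verts G"
      using D(1) by auto
    with cover_add_leaf_not_in[OF wf x finD False cover]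
    have "tau G w \<le> ereal (1/2)"
      using tau_le[OF fin _ D(2)] by simp
    moreover have "ereal (1/2) = 1/2"
      by (simp add: one_ereal_def numeral_eq_ereal ereal_divide)
    ultimately show ?thesis
      by simp
  qed
qed

lemma op3_gamma_le_gamma_e:
  assumes G: "G \<in> leaf_trees" and w: "w \<in> verts G"
    and new: "x \<notin> verts G" "y \<notin> verts G" "z \<notin> verts G" "x \<noteq> y" "y \<noteq> z" "x \<noteq> z"
    and tau: "1/2 < tau G w" and sc: "subcubic (add_leaf (add_leaf (add_leaf G w x) x y) y z)"
    and IH: "subcubic G \<Longrightarrow> gamma G \<le> gamma_e G"
  shows "gamma (add_leaf (add_leaf (add_leaf G w x) x y) y z) \<le>
    gamma_e (add_leaf (add_leaf (add_leaf G w x) x y) y z)"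
proof (rule ccontr)
  let ?H = "add_leaf G w x"
  let ?T = "add_leaf (add_leaf ?H x y) y z"
  assume contra: "\<not> gamma ?T \<le> gamma_e ?T"
  have fin: "finite (verts G)"
    using leaf_trees_wf[OF G] by auto
  have H: "?H \<in> leaf_trees" "x \<in> verts ?H" "y \<notin> verts ?H" "z \<notin> verts ?H"
    using leaf_trees.add_leaf[OF G w new(1)] new by auto
  have "subcubic (add_leaf ?H x y)"
    using subcubic_add_leafD[OF leaf_trees.add_leaf[OF H(1,2,3)] _ _ sc] new by simp
  then have subH: "subcubic ?H"
    using subcubic_add_leafD[OF H(1,2,3)] by simp
  then have sub: "subcubic G" "degree G w \<le> 2"
    using subcubic_add_leafD[OF G w new(1)] by auto
  obtain D1 where D1: "D1 \<subseteq> verts ?H" "card D1 < gamma_e ?T" and cover: "boost_dom ?H D1 x 1"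
    using pendant_path_cover[OF H(1) subH H(2-4) new(5)] by blast
  have "gamma ?T \<le> gamma G + 1"
    using fin by (intro gamma_le_star_extension[where y = y]) (auto simp: insert_commute)
  then have "card D1 < gamma_e G"
    using contra D1(2) IH[OF sub(1)] gamma_e_le_gamma[OF fin] by simp
  then have "tau G w \<le> 1/2"
    using tau_le_half_add_leaf[OF G sub(1) w sub(2) new(1) D1(1) _ cover] by simp
  then show False
    using tau by simp
qed

lemma op1_add_leaf: "(insert y V, insert {x, y} E) = add_leaf (V, E) x y"
  by (simp add: add_leaf_def)

lemma op2_add_leaf: "(V \<union> {y, z}, E \<union> {{x, y}, {y, z}}) = add_leaf (add_leaf (V, E) x y) y z"
  by (auto simp: add_leaf_def)

lemma op3_add_leaf:
  "(V \<union> {x, y, z}, E \<union> {{w, x}, {x, y}, {y, z}}) = add_leaf (add_leaf (add_leaf (V, E) w x) x y) y z"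
  by (auto simp: add_leaf_def)

lemma obtainable_leaf_trees: "(V, E) \<in> obtainable \<Longrightarrow> (V, E) \<in> leaf_trees"
proof (induction V E rule: obtainable.induct)
  case (op1 V E x y)
  then show ?case
    unfolding op1_add_leaf by (intro leaf_trees.add_leaf) auto
next
  case (op2 V E x y z)
  then show ?case
    unfolding op2_add_leaf by (intro leaf_trees.add_leaf) auto
next
  case (op3 V E w x y z)
  then show ?case
    unfolding op3_add_leaf by (intro leaf_trees.add_leaf) auto
qed (rule leaf_trees.single)

lemma gamma_e_pos:
  assumes "finite (verts G)" "verts G \<noteq> {}"
  shows "0 < gamma_e G"
proof -
  obtain D where D: "exp_dom G D" "card D = gamma_e G"
    using obtain_min_exp_dom assms(1) by blast
  obtain u where "u \<in> verts G"
    using assms(2) by blast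
  then have "D \<noteq> {}"
    using D(1) unfolding exp_dom_def wgt_def by auto
  moreover have "finite D"
    using D(1) assms(1) finite_subset unfolding exp_dom_def by blast
  ultimately have "0 < card D"
    by (simp add: card_gt_0_iff)
  then show ?thesis
    using D(2) by simp
qed

lemma gamma_le_gamma_e_obtainable:
  "(V, E) \<in> obtainable \<Longrightarrow> subcubic (V, E) \<Longrightarrow> gamma (V, E) \<le> gamma_e (V, E)"
proof (induction V E rule: obtainable.induct)
  case (base v)
  have "dominating ({v}, {}) {v}"
    unfolding dominating_def by simp
  then have "gamma ({v}, {}) \<le> 1"
    using gamma_le_card by fastforce
  then show ?case
    using gamma_e_pos[of "({v}, {})"] by simp
next
  case (op1 V E x y)
  obtain Dm where "min_dom_set (V, E) Dm" "x \<in> Dm"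
    using op1.hyps(4) by blast
  with op1 show ?case
    unfolding op1_add_leaf by (intro op1_gamma_le_gamma_e[where Dm = Dm] obtainable_leaf_trees) auto
next
  case (op2 V E x y z)
  then show ?case
    unfolding op2_add_leaf by (intro op2_gamma_le_gamma_e obtainable_leaf_trees) auto
next
  case (op3 V E w x y z)
  then show ?case
    unfolding op3_add_leaf by (intro op3_gamma_le_gamma_e obtainable_leaf_trees) auto
qed

theorem lemma3:
  fixes T :: "'a graph"
  assumes "T \<in> obtainable" and "subcubic T"
  shows "gamma_e T = gamma T"
proof -
  obtain V E where T: "T = (V, E)"
    by (cases T)
  have "finite (verts T)"
    using leaf_trees_wf obtainable_leaf_trees assms(1) unfolding T by blast
  moreover have "gamma T \<le> gamma_e T"
    using gamma_le_gamma_e_obtainable assms unfolding T by blast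
  ultimately show ?thesis
    using gamma_e_le_gamma le_antisym by blast
qed

end
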